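(* Let $k$ be an odd integer with $k\ge 5$, let $D$ be a strong $k$-quasi-transitive digraph with $\mathrm{diam}(D)\ge k+2$, let $u,v\in V(D)$ with $d(u,v)=k+2$, and let $P=x_0x_1\ldots x_{k+2}$ be a shortest $(u,v)$-path with $x_0=u$, $x_{k+2}=v$. Let $O(P)=\{x_1,x_3,\ldots,x_{k+2}\}$, $E(P)=\{x_0,x_2,\ldots,x_{k+1}\}$, $I=\{x\in V(D)\setminus V(P): x\Rightarrow V(P)\}$, $W=\{x\in V(D)\setminus V(P): V(P)\Rightarrow x\}$ and $B=V(D)\setminus(V(P)\cup I\cup W)$. For any $x\in V(D)\setminus V(P)$: (1) Suppose $x\in I$. If $x\rightarrow x_i$ for some $x_i\in E(P)$, then $x\mapsto E(P)$; if $x\rightarrow x_i$ for some $x_i\in O(P)$, then $x\mapsto O(P)$. (2) Suppose $x\in W$. If $x_i\rightarrow x$ for some $x_i\in E(P)$, then $E(P)\mapsto x$; if $x_i\rightarrow x$ for some $x_i\in O(P)$, then $O(P)\mapsto x$. (3) Suppose $x\in B$. If $x$ is adjacent to some vertex of $O(P)$, then either $x$ is adjacent to every vertex of $O(P)$, or there exist $x_s,x_t\in O(P)$ with $3\le t<s\le k$ such that $\{x_s,x_{s+2},\ldots,x_{k+2}\}\mapsto x\mapsto\{x_1,x_3,\ldots,x_t\}$. If $x$ is adjacent to some vertex of $E(P)$, then either $x$ is adjacent to every vertex of $E(P)$, or there exist $x_s,x_t\in E(P)$ with $2\le t<s\le k-1$ such that $\{x_s,x_{s+2},\ldots,x_{k+1}\}\mapsto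 x\mapsto\{x_0,x_2,\ldots,x_t\}$.
   Context: All digraphs are finite, without loops or multiple arcs (opposite arcs allowed). $x\rightarrow y$ means $xy\in A(D)$; $x,y$ are adjacent if $x\rightarrow y$ or $y\rightarrow x$. For disjoint vertex sets $X,Y$ (singletons identified with vertices): $X\rightarrow Y$ means every vertex of $X$ dominates every vertex of $Y$; $X\Rightarrow Y$ means there is no arc from $Y$ to $X$; $X\mapsto Y$ means both $X\rightarrow Y$ and $X\Rightarrow Y$. For $k\ge 2$, $D$ is $k$-quasi-transitive if for every path $x_0x_1\ldots x_k$ of length $k$, $x_0$ and $x_k$ are adjacent. $d(x,y)$ is the length of a shortest $(x,y)$-path, $\mathrm{diam}(D)=\max_{x,y}d(x,y)$. *)

theory Defs
  imports Main
begin

definition digraph :: "'a set \<Rightarrow> ('a \<times> 'a) set \<Rightarrow> bool" where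
  "digraph V A \<longleftrightarrow> finite V \<and> A \<subseteq> V \<times> V \<and> (\<forall>x. (x, x) \<notin> A)"

definition adjacent :: "('a \<times> 'a) set \<Rightarrow> 'a \<Rightarrow> 'a \<Rightarrow> bool" where
  "adjacent A x y \<longleftrightarrow> (x, y) \<in> A \<or> (y, x) \<in> A"

text \<open>A path is a nonempty list of distinct vertices, consecutive ones joined by arcs;
  its length is the number of arcs, i.e. length xs - 1.\<close>

definition is_path :: "'a set \<Rightarrow> ('a \<times> 'a) set \<Rightarrow> 'a list \<Rightarrow> bool" where
  "is_path V A xs \<longleftrightarrow> xs \<noteq> [] \<and> distinct xs \<and> set xs \<subseteq> V \<and>
     (\<forall>i. Suc i < length xs \<longrightarrow> (xs ! i, xs ! Suc i) \<in> A)"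

definition path_from_to :: "'a set \<Rightarrow> ('a \<times> 'a) set \<Rightarrow> 'a list \<Rightarrow> 'a \<Rightarrow> 'a \<Rightarrow> bool" where
  "path_from_to V A xs x y \<longleftrightarrow> is_path V A xs \<and> hd xs = x \<and> last xs = y"

definition k_quasi_transitive :: "nat \<Rightarrow> 'a set \<Rightarrow> ('a \<times> 'a) set \<Rightarrow> bool" where
  "k_quasi_transitive k V A \<longleftrightarrow>
     (\<forall>xs. is_path V A xs \<and> length xs = k + 1 \<longrightarrow> adjacent A (hd xs) (last xs))"

definition strong :: "'a set \<Rightarrow> ('a \<times> 'a) set \<Rightarrow> bool" where
  "strong V A \<longleftrightarrow> (\<forall>x\<in>V. \<forall>y\<in>V. \<exists>xs. path_from_to V A xs x y)"

definition dist :: "'a set \<Rightarrow> ('a \<times> 'a) set \<Rightarrow> 'a \<Rightarrow> 'a \<Rightarrow> nat" where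
  "dist V A x y = (LEAST n. \<exists>xs. path_from_to V A xs x y \<and> length xs = Suc n)"

definition diam :: "'a set \<Rightarrow> ('a \<times> 'a) set \<Rightarrow> nat" where
  "diam V A = Max {dist V A x y | x y. x \<in> V \<and> y \<in> V}"

text \<open>X \<rightarrow> Y, X \<Rightarrow> Y, X \<mapsto> Y for vertex sets.\<close>

definition dominates :: "('a \<times> 'a) set \<Rightarrow> 'a set \<Rightarrow> 'a set \<Rightarrow> bool" where
  "dominates A X Y \<longleftrightarrow> (\<forall>x\<in>X. \<forall>y\<in>Y. (x, y) \<in> A)"

definition no_back_arc :: "('a \<times> 'a) set \<Rightarrow> 'a set \<Rightarrow> 'a set \<Rightarrow> bool" where
  "no_back_arc A X Y \<longleftrightarrow> (\<forall>x\<in>X. \<forall>y\<in>Y. (y, x) \<notin> A)"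

definition maps_to :: "('a \<times> 'a) set \<Rightarrow> 'a set \<Rightarrow> 'a set \<Rightarrow> bool" where
  "maps_to A X Y \<longleftrightarrow> dominates A X Y \<and> no_back_arc A X Y"

end

(*
  Minimality of P forbids forward chords x_i -> x_j with j >= i + 2
  and detours x_i -> x -> x_j with j >= i + 3. Applying k-quasi-transitivity to the paths
  x_c ... x_{c+k} therefore yields the back arcs x_{c+k} -> x_c (c <= 2) and x_{k+2} -> x_0.
  Closing paths of length k through x with these back arcs shows that an arc between x and
  a vertex of one parity class forces x to be adjacent to the vertices one or two steps further
  along the class, or at its other end. A combinatorial analysis of these propagation rules on
  the class, indexed 0 ... M with k + 1 = 2M, gives the three statements.
*)

theory Submission
  imports Defs
begin

lemma is_path_iff_successively:
  "is_path V A xs \<longleftrightarrow>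
     xs \<noteq> [] \<and> distinct xs \<and> set xs \<subseteq> V \<and> successively (\<lambda>a b. (a, b) \<in> A) xs"
  by (simp add: is_path_def successively_conv_nth)

lemma dist_less_length:
  assumes "path_from_to V A xs x y"
  shows "dist V A x y < length xs"
proof -
  have "xs \<noteq> []" using assms by (simp add: path_from_to_def is_path_def)
  then have "\<exists>ys. path_from_to V A ys x y \<and> length ys = Suc (length xs - 1)"
    using assms by auto
  then have "dist V A x y \<le> length xs - 1" unfolding dist_def by (rule Least_le)
  then show ?thesis using \<open>xs \<noteq> []\<close> by (cases xs) auto
qed

lemma atLeastLessThan_subset_atMost: "{a..<b} \<subseteq> {..c} \<longleftrightarrow> (a < b \<longrightarrow> b \<le> Suc c)"
  by (cases b) (auto simp: subset_iff)

lemma maps_to_mono: "maps_to A X Y \<Longrightarrow> X' \<subseteq> X \<Longrightarrow> Y' \<subseteq> Y \<Longrightarrow> maps_to A X' Y'"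
  unfolding maps_to_def dominates_def no_back_arc_def by blast

text \<open>Here \<open>out r\<close> and \<open>inn r\<close> stand for \<open>x \<rightarrow> y\<^sub>r\<close> and \<open>y\<^sub>r \<rightarrow> x\<close>, where
  \<open>y\<^sub>0, \<dots>, y\<^sub>M\<close> is one parity class of the shortest path.\<close>

locale adjacency_propagation =
  fixes out inn :: "nat \<Rightarrow> bool" and M :: nat
  assumes M_ge: "M \<ge> 2"
    and out_step_down: "\<And>r. out r \<Longrightarrow> 1 \<le> r \<Longrightarrow> r \<le> M \<Longrightarrow> out (r - 1) \<or> inn (r - 1)"
    and out_step_down2: "\<And>r. out r \<Longrightarrow> 2 \<le> r \<Longrightarrow> r \<le> M \<Longrightarrow> out (r - 2) \<or> inn (r - 2)"
    and out_wrap: "\<And>r. out r \<Longrightarrow> r \<le> 1 \<Longrightarrow> out (r + M - 1) \<or> inn (r + M - 1)"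
    and inn_step_up: "\<And>r. inn r \<Longrightarrow> r + 1 \<le> M \<Longrightarrow> out (r + 1) \<or> inn (r + 1)"
    and inn_step_up2: "\<And>r. inn r \<Longrightarrow> r + 2 \<le> M \<Longrightarrow> out (r + 2) \<or> inn (r + 2)"
    and inn_wrap:
      "\<And>r. inn r \<Longrightarrow> M - 1 \<le> r \<Longrightarrow> r \<le> M \<Longrightarrow> out (r - (M - 1)) \<or> inn (r - (M - 1))"
    and inn_out_gap: "\<And>r r'. inn r \<Longrightarrow> out r' \<Longrightarrow> r \<le> M \<Longrightarrow> r' \<le> M \<Longrightarrow> r' \<le> r + 1"
begin

definition end_pattern :: bool where
  "end_pattern \<longleftrightarrow> out 0 \<and> \<not> inn 0 \<and> out 1 \<and> \<not> inn 1 \<and>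
     inn (M - 1) \<and> \<not> out (M - 1) \<and> inn M \<and> \<not> out M"

text \<open>Reversing all arcs and the path maps index \<open>r\<close> to \<open>M - r\<close> and swaps \<open>out\<close> and \<open>inn\<close>.\<close>

lemma dual: "adjacency_propagation (\<lambda>r. inn (M - r)) (\<lambda>r. out (M - r)) M"
proof
  fix r
  show "inn (M - r) \<Longrightarrow> 1 \<le> r \<Longrightarrow> r \<le> M \<Longrightarrow> inn (M - (r - 1)) \<or> out (M - (r - 1))"
    using inn_step_up[of "M - r"] by (simp add: Suc_diff_le disj_commute)
  show "inn (M - (r - 2)) \<or> out (M - (r - 2))" if "inn (M - r)" "2 \<le> r" "r \<le> M"
  proof -
    have "M - (r - 2) = M - r + 2" using that by linarith
    then show ?thesis using inn_step_up2[OF \<open>inn (M - r)\<close>] that by auto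
  qed
  show "inn (M - r) \<Longrightarrow> r \<le> 1 \<Longrightarrow> inn (M - (r + M - 1)) \<or> out (M - (r + M - 1))"
    using inn_wrap[of "M - r"] M_ge by (simp add: disj_commute)
  show "out (M - r) \<Longrightarrow> r + 1 \<le> M \<Longrightarrow> inn (M - (r + 1)) \<or> out (M - (r + 1))"
    using out_step_down[of "M - r"] by (simp add: disj_commute)
  show "out (M - r) \<Longrightarrow> r + 2 \<le> M \<Longrightarrow> inn (M - (r + 2)) \<or> out (M - (r + 2))"
    using out_step_down2[of "M - r"] by (simp add: disj_commute)
  show "out (M - r) \<Longrightarrow> M - 1 \<le> r \<Longrightarrow> r \<le> M \<Longrightarrow>
      inn (M - (r - (M - 1))) \<or> out (M - (r - (M - 1)))"
    using out_wrap[of "M - r"] M_ge by (simp add: disj_commute)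
  fix r'
  show "out (M - r) \<Longrightarrow> inn (M - r') \<Longrightarrow> r \<le> M \<Longrightarrow> r' \<le> M \<Longrightarrow> r' \<le> r + 1"
    using inn_out_gap[of "M - r'" "M - r"] by simp
qed (use M_ge in simp)

lemma dual_end_pattern:
  "adjacency_propagation.end_pattern (\<lambda>r. inn (M - r)) (\<lambda>r. out (M - r)) M \<longleftrightarrow> end_pattern"
  using M_ge by (auto simp: adjacency_propagation.end_pattern_def[OF dual] end_pattern_def)

lemma inn_upward:
  assumes "inn r" and no_out: "\<forall>j. r < j \<and> j \<le> M \<longrightarrow> \<not> out j" and "r \<le> j" "j \<le> M"
  shows "inn j"
  using assms(3,4)
proof (induction j rule: dec_induct)
  case base
  show ?case by fact
next
  case (step j)
  then show ?case using inn_step_up[of j] no_out by auto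
qed

lemma all_inn_if_no_out:
  assumes no_out: "\<forall>r\<le>M. \<not> out r" and "inn r0" "r0 \<le> M"
  shows "\<forall>r\<le>M. inn r"
proof -
  have "inn M" using inn_upward[OF \<open>inn r0\<close>] assms by simp
  then have "inn 1" using inn_wrap[of M] no_out M_ge by simp
  then have "inn (M - 1)" using inn_upward[of 1 "M - 1"] no_out M_ge by simp
  then have "inn 0" using inn_wrap[of "M - 1"] no_out by simp
  then show ?thesis using inn_upward[of 0] no_out by simp
qed

lemma all_out_if_no_inn:
  assumes "\<forall>r\<le>M. \<not> inn r" and "out r0" "r0 \<le> M"
  shows "\<forall>r\<le>M. out r"
proof (intro allI impI)
  fix r
  assume "r \<le> M"
  have "\<forall>r\<le>M. out (M - r)"
    using adjacency_propagation.all_inn_if_no_out[OF dual, of "M - r0"] assms by auto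
  then show "out r" using \<open>r \<le> M\<close> by (metis diff_diff_cancel diff_le_self)
qed

lemma not_out_above_gap:
  assumes gap: "\<not> out a" "\<not> inn a" and "a < r" "r \<le> M"
  shows "\<not> out r"
  using assms(3,4)
proof (induction r rule: less_induct)
  case (less r)
  show ?case
  proof
    assume "out r"
    consider "r = a + 1" | "r = a + 2" | "a + 3 \<le> r" using less.prems by linarith
    then show False
    proof cases
      case 1
      then show False using out_step_down[OF \<open>out r\<close>] less.prems gap by simp
    next
      case 2
      then show False using out_step_down2[OF \<open>out r\<close>] less.prems gap by simp
    next
      case 3
      then have "inn (r - 2)" using out_step_down2[OF \<open>out r\<close>] less.IH[of "r - 2"] less.prems by simp
      then have "r \<le> r - 2 + 1" using inn_out_gap[OF _ \<open>out r\<close>] less.prems by simp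
      then show False using 3 by simp
    qed
  qed
qed

lemma not_inn_below_gap:
  assumes gap: "\<not> out a" "\<not> inn a" "a \<le> M" and "r < a"
  shows "\<not> inn r"
  using adjacency_propagation.not_out_above_gap[OF dual, of "M - a" "M - r"] assms by simp

lemma end_pattern_if_inn_above_gap:
  assumes gap: "\<not> out a" "\<not> inn a" "a \<le> M" and "inn r" "a < r" "r \<le> M"
  shows end_pattern
proof -
  have no_out_above: "\<not> out j" if "a < j" "j \<le> M" for j
    using not_out_above_gap[OF gap(1,2) that] .
  have no_inn_below: "\<not> inn j" if "j < a" for j
    using not_inn_below_gap[OF gap that] .
  have "inn M" using inn_upward[OF \<open>inn r\<close>] assms no_out_above by simp
  then have adj1: "out 1 \<or> inn 1" using inn_wrap[of M] M_ge by simp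
  have "a \<noteq> 0"
  proof
    assume "a = 0"
    then have "inn 1" using adj1 no_out_above M_ge by auto
    then have "inn (M - 1)" using inn_upward[of 1 "M - 1"] no_out_above \<open>a = 0\<close> M_ge by simp
    then show False using inn_wrap[of "M - 1"] gap \<open>a = 0\<close> by simp
  qed
  moreover have "a \<noteq> 1" using adj1 gap by auto
  ultimately have "out 1" "\<not> inn 0" "\<not> inn 1" using adj1 no_inn_below by auto
  moreover have "out 0" using out_step_down[OF \<open>out 1\<close>] \<open>\<not> inn 0\<close> M_ge by simp
  moreover have adj_M1: "out (M - 1) \<or> inn (M - 1)" and "out M \<or> inn M"
    using out_wrap[OF \<open>out 0\<close>] out_wrap[OF \<open>out 1\<close>] M_ge by simp_all
  then have "a < M - 1" using gap by (cases "a = M - 1 \<or> a = M") auto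
  then have "inn (M - 1)" "\<not> out (M - 1)" "\<not> out M" using adj_M1 no_out_above by auto
  ultimately show ?thesis using \<open>inn M\<close> by (simp add: end_pattern_def)
qed

lemma all_adjacent_or_end_pattern:
  assumes "r0 \<le> M" "out r0 \<or> inn r0"
  shows "(\<forall>r\<le>M. out r \<or> inn r) \<or> end_pattern"
proof (cases "\<forall>r\<le>M. out r \<or> inn r")
  case False
  then obtain a where gap: "\<not> out a" "\<not> inn a" "a \<le> M" by auto
  moreover have "r0 \<noteq> a" using assms gap by auto
  ultimately consider "a < r0" | "r0 < a" by linarith
  then have end_pattern
  proof cases
    case 1
    then have "inn r0" using not_out_above_gap[OF gap(1,2)] assms by auto
    then show ?thesis using end_pattern_if_inn_above_gap gap 1 assms by blast
  next
    case 2
    then have "out r0" using not_inn_below_gap[OF gap] assms by auto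
    then have "adjacency_propagation.end_pattern (\<lambda>r. inn (M - r)) (\<lambda>r. out (M - r)) M"
      using adjacency_propagation.end_pattern_if_inn_above_gap[OF dual, of "M - a" "M - r0"] gap 2 by simp
    then show ?thesis by (simp add: dual_end_pattern)
  qed
  then show ?thesis ..
qed simp

end

locale kqt_geodesic =
  fixes V :: "'a set" and A :: "('a \<times> 'a) set" and k :: nat and P :: "'a list" and x :: 'a
  assumes k_odd: "odd k" and k_ge: "k \<ge> 5"
    and kqt: "k_quasi_transitive k V A"
    and P_path: "is_path V A P" and P_length: "length P = k + 3"
    and P_shortest: "\<And>ys. path_from_to V A ys (hd P) (last P) \<Longrightarrow> length P \<le> length ys"
    and x_in_V: "x \<in> V" and x_notin_P: "x \<notin> set P"
begin

text \<open>Index \<open>k + 3\<close> denotes \<open>x\<close>, so walks through \<open>x\<close> can be written as lists of indices.\<close>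

definition node :: "nat \<Rightarrow> 'a" where
  "node i = (P @ [x]) ! i"

lemma node_P [simp]: "i < k + 3 \<Longrightarrow> node i = P ! i"
  by (simp add: node_def nth_append P_length)

lemma node_x [simp]: "node (k + 3) = x"
  by (simp add: node_def nth_append P_length)

lemma inj_on_node: "inj_on node {..k + 3}"
  unfolding node_def
  using P_path x_notin_P by (intro inj_on_nth) (auto simp: is_path_def P_length)

lemma node_in_V: "i \<le> k + 3 \<Longrightarrow> node i \<in> V"
  using P_path x_in_V by (auto simp: node_def nth_append P_length is_path_def)

lemma successively_node_upt:
  "b \<le> k + 3 \<Longrightarrow> successively (\<lambda>i j. (node i, node j) \<in> A) [a..<b]"
  using P_path by (auto simp: successively_conv_nth is_path_def P_length)

definition index_walk :: "nat list \<Rightarrow> bool" where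
  "index_walk ws \<longleftrightarrow>
     distinct ws \<and> set ws \<subseteq> {..k + 3} \<and> successively (\<lambda>i j. (node i, node j) \<in> A) ws"

lemmas index_walk_simps = index_walk_def successively_append_iff successively_Cons
  successively_node_upt hd_append last_append atLeastLessThan_subset_atMost

lemma is_path_index_walk:
  assumes "index_walk ws" "ws \<noteq> []"
  shows "is_path V A (map node ws)"
proof -
  have "inj_on node (set ws)" using inj_on_node assms(1) by (auto simp: index_walk_def intro: inj_on_subset)
  then show ?thesis using assms node_in_V
    by (auto simp: is_path_iff_successively index_walk_def distinct_map successively_map)
qed

lemma index_walk_ends_adjacent:
  assumes "index_walk ws" "length ws = k + 1" "hd ws = i" "last ws = j"
  shows "adjacent A (node i) (node j)"
proof -
  have "ws \<noteq> []" using assms(2) by auto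
  then have "adjacent A (hd (map node ws)) (last (map node ws))"
    using kqt is_path_index_walk assms unfolding k_quasi_transitive_def by simp
  then show ?thesis using \<open>ws \<noteq> []\<close> assms by (simp add: hd_map last_map)
qed

lemma index_walk_length:
  assumes "index_walk ws" "ws \<noteq> []" "hd ws = 0" "last ws = k + 2"
  shows "k + 3 \<le> length ws"
proof -
  have "path_from_to V A (map node ws) (hd P) (last P)"
    using assms is_path_index_walk P_length P_path
    by (auto simp: is_path_def path_from_to_def hd_map last_map hd_conv_nth last_conv_nth)
  then show ?thesis using P_shortest P_length by fastforce
qed

context
  notes upt_Suc [simp del]
begin

lemma no_shortcut:
  assumes "(node i, node j) \<in> A" "i + 2 \<le> j" "j \<le> k + 2"
  shows False
proof -
  have "k + 3 \<le> length ([0..<i + 1] @ [j..<k + 3])"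
    by (rule index_walk_length) (use assms in \<open>auto simp: index_walk_simps\<close>)
  then show False using assms by simp
qed

lemma no_shortcut_via_x:
  assumes "(node i, x) \<in> A" "(x, node j) \<in> A" "i + 3 \<le> j" "j \<le> k + 2"
  shows False
proof -
  have "k + 3 \<le> length ([0..<i + 1] @ [k + 3] @ [j..<k + 3])"
    by (rule index_walk_length) (use assms in \<open>auto simp: index_walk_simps\<close>)
  then show False using assms by simp
qed

lemma back_arc:
  assumes "c \<le> 2"
  shows "(node (c + k), node c) \<in> A"
proof -
  have "adjacent A (node c) (node (c + k))"
    by (rule index_walk_ends_adjacent[of "[c..<c + k + 1]"]) (use assms in \<open>auto simp: index_walk_simps\<close>)
  moreover have "(node c, node (c + k)) \<notin> A" using no_shortcut[of c "c + k"] assms k_ge by auto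
  ultimately show ?thesis by (simp add: adjacent_def)
qed

lemma back_arc_ends: "(node (k + 2), node 0) \<in> A"
proof -
  have "adjacent A (node (k + 2)) (node 0)"
    by (rule index_walk_ends_adjacent[of "[k + 2] @ [2..<k + 1] @ [0]"])
      (use back_arc[of 0] back_arc[of 2] k_ge in \<open>auto simp: index_walk_simps add.commute\<close>)
  moreover have "(node 0, node (k + 2)) \<notin> A" using no_shortcut[of 0 "k + 2"] by auto
  ultimately show ?thesis by (simp add: adjacent_def)
qed

lemma out_adjacent_minus2:
  assumes "(x, node i) \<in> A" "2 \<le> i" "i \<le> k + 2"
  shows "adjacent A x (node (i - 2))"
proof -
  have "adjacent A (node (k + 3)) (node (i - 2))"
  proof (cases "i \<le> k")
    case True
    show ?thesis
      by (rule index_walk_ends_adjacent[of "[k + 3] @ [i..<k + 1] @ [0..<i - 1]"])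
        (use True back_arc[of 0] assms in \<open>auto simp: index_walk_simps\<close>)
  next
    case False
    show ?thesis
      by (rule index_walk_ends_adjacent[of "[k + 3, i] @ [i - k..<i - 1]"])
        (use False back_arc[of "i - k"] assms k_ge in \<open>auto simp: index_walk_simps\<close>)
  qed
  then show ?thesis by simp
qed

lemma out_adjacent_minus4:
  assumes "(x, node i) \<in> A" "4 \<le> i" "i \<le> k + 2"
  shows "adjacent A x (node (i - 4))"
proof -
  have "adjacent A (node (k + 3)) (node (i - 4))"
    by (rule index_walk_ends_adjacent[of "[k + 3] @ [i..<k + 3] @ [0..<i - 3]"])
      (use back_arc_ends assms in \<open>auto simp: index_walk_simps\<close>)
  then show ?thesis by simp
qed

lemma out_adjacent_wrap:
  assumes "(x, node i) \<in> A" "i \<le> 3"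
  shows "adjacent A x (node (i + k - 1))"
proof -
  have "adjacent A (node (k + 3)) (node (i + k - 1))"
    by (rule index_walk_ends_adjacent[of "[k + 3] @ [i..<i + k]"])
      (use assms k_ge in \<open>auto simp: index_walk_simps\<close>)
  then show ?thesis by simp
qed

lemma in_adjacent_plus2:
  assumes "(node i, x) \<in> A" "i + 2 \<le> k + 2"
  shows "adjacent A x (node (i + 2))"
proof -
  have "adjacent A (node (i + 2)) (node (k + 3))"
  proof (cases "i + 2 \<le> k")
    case True
    show ?thesis
      by (rule index_walk_ends_adjacent[of "[i + 2..<k + 1] @ [0..<i + 1] @ [k + 3]"])
        (use True back_arc[of 0] assms in \<open>auto simp: index_walk_simps\<close>)
  next
    case False
    show ?thesis
      by (rule index_walk_ends_adjacent[of "[i + 2] @ [i + 2 - k..<i + 1] @ [k + 3]"])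
        (use False back_arc[of "i + 2 - k"] assms k_ge in \<open>auto simp: index_walk_simps\<close>)
  qed
  then show ?thesis by (auto simp: adjacent_def)
qed

lemma in_adjacent_plus4:
  assumes "(node i, x) \<in> A" "i + 4 \<le> k + 2"
  shows "adjacent A x (node (i + 4))"
proof -
  have "adjacent A (node (i + 4)) (node (k + 3))"
    by (rule index_walk_ends_adjacent[of "[i + 4..<k + 3] @ [0..<i + 1] @ [k + 3]"])
      (use back_arc_ends assms in \<open>auto simp: index_walk_simps\<close>)
  then show ?thesis by (auto simp: adjacent_def)
qed

lemma in_adjacent_wrap:
  assumes "(node i, x) \<in> A" "k - 1 \<le> i" "i \<le> k + 2"
  shows "adjacent A x (node (i + 1 - k))"
proof -
  have "adjacent A (node (i + 1 - k)) (node (k + 3))"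
    by (rule index_walk_ends_adjacent[of "[i + 1 - k..<i + 1] @ [k + 3]"])
      (use assms k_ge in \<open>auto simp: index_walk_simps\<close>)
  then show ?thesis by (auto simp: adjacent_def)
qed

end

lemma k_plus_1_double:
  obtains M where "k + 1 = 2 * M"
  using k_odd by (metis evenE odd_even_add odd_one)

lemma adjacency_propagation_parity_class:
  assumes "b \<le> 1" "k + 1 = 2 * M"
  shows "adjacency_propagation (\<lambda>r. (x, node (b + 2 * r)) \<in> A) (\<lambda>r. (node (b + 2 * r), x) \<in> A) M"
proof
  show "M \<ge> 2" using assms k_ge by simp
next
  fix r
  assume "(x, node (b + 2 * r)) \<in> A" "1 \<le> r" "r \<le> M"
  moreover have "b + 2 * r - 2 = b + 2 * (r - 1)" using \<open>1 \<le> r\<close> by simp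
  ultimately show "(x, node (b + 2 * (r - 1))) \<in> A \<or> (node (b + 2 * (r - 1)), x) \<in> A"
    using out_adjacent_minus2[of "b + 2 * r"] assms by (simp add: adjacent_def)
next
  fix r
  assume "(x, node (b + 2 * r)) \<in> A" "2 \<le> r" "r \<le> M"
  moreover have "b + 2 * r - 4 = b + 2 * (r - 2)" using \<open>2 \<le> r\<close> by simp
  ultimately show "(x, node (b + 2 * (r - 2))) \<in> A \<or> (node (b + 2 * (r - 2)), x) \<in> A"
    using out_adjacent_minus4[of "b + 2 * r"] assms by (simp add: adjacent_def)
next
  fix r
  assume "(x, node (b + 2 * r)) \<in> A" "r \<le> 1"
  moreover have "b + 2 * r + k - 1 = b + 2 * (r + M - 1)" using assms k_ge by simp
  ultimately show "(x, node (b + 2 * (r + M - 1))) \<in> A \<or> (node (b + 2 * (r + M - 1)), x) \<in> A"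
    using out_adjacent_wrap[of "b + 2 * r"] assms by (simp add: adjacent_def)
next
  fix r
  assume "(node (b + 2 * r), x) \<in> A" "r + 1 \<le> M"
  then show "(x, node (b + 2 * (r + 1))) \<in> A \<or> (node (b + 2 * (r + 1)), x) \<in> A"
    using in_adjacent_plus2[of "b + 2 * r"] assms by (simp add: adjacent_def)
next
  fix r
  assume "(node (b + 2 * r), x) \<in> A" "r + 2 \<le> M"
  then have "adjacent A x (node (b + 2 * r + 4))" using in_adjacent_plus4 assms by simp
  moreover have "b + 2 * r + 4 = b + 2 * (r + 2)" by simp
  ultimately show "(x, node (b + 2 * (r + 2))) \<in> A \<or> (node (b + 2 * (r + 2)), x) \<in> A"
    by (metis adjacent_def)
next
  fix r
  assume "(node (b + 2 * r), x) \<in> A" "M - 1 \<le> r" "r \<le> M"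
  moreover have "b + 2 * r + 1 - k = b + 2 * (r - (M - 1))" using calculation assms k_ge by simp
  ultimately show "(x, node (b + 2 * (r - (M - 1)))) \<in> A \<or> (node (b + 2 * (r - (M - 1))), x) \<in> A"
    using in_adjacent_wrap[of "b + 2 * r"] assms by (simp add: adjacent_def)
next
  fix r r'
  assume "(node (b + 2 * r), x) \<in> A" "(x, node (b + 2 * r')) \<in> A" "r \<le> M" "r' \<le> M"
  then show "r' \<le> r + 1" using no_shortcut_via_x[of "b + 2 * r" "b + 2 * r'"] assms by fastforce
qed

definition parity_class :: "nat \<Rightarrow> 'a set" where
  "parity_class b = {P ! i | i. i \<le> k + 2 \<and> (odd i \<longleftrightarrow> odd b)}"

lemma parity_class_subset: "parity_class b \<subseteq> set P"
  using P_length by (auto simp: parity_class_def)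

lemma parity_class_eq_image:
  assumes "b \<le> 1" "k + 1 = 2 * M"
  shows "parity_class b = (\<lambda>r. node (b + 2 * r)) ` {..M}"
proof (intro equalityI subsetI)
  fix y
  assume "y \<in> parity_class b"
  then obtain i where i: "y = P ! i" "i \<le> k + 2" "odd i \<longleftrightarrow> odd b" by (auto simp: parity_class_def)
  then have "i = b + 2 * (i div 2)" "i div 2 \<le> M" using assms by presburger+
  moreover have "y = node i" using i by simp
  ultimately show "y \<in> (\<lambda>r. node (b + 2 * r)) ` {..M}" by (metis atMost_iff image_eqI)
next
  fix y
  assume "y \<in> (\<lambda>r. node (b + 2 * r)) ` {..M}"
  then obtain r where "r \<le> M" "y = node (b + 2 * r)" by blast
  then show "y \<in> parity_class b" using assms by (auto simp: parity_class_def)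
qed

lemma maps_to_parity_class:
  assumes "b \<le> 1" and no_in: "\<forall>y\<in>set P. (y, x) \<notin> A" and "\<exists>y\<in>parity_class b. (x, y) \<in> A"
  shows "maps_to A {x} (parity_class b)"
proof -
  obtain M where M: "k + 1 = 2 * M" by (rule k_plus_1_double)
  interpret adjacency_propagation "\<lambda>r. (x, node (b + 2 * r)) \<in> A" "\<lambda>r. (node (b + 2 * r), x) \<in> A" M
    using adjacency_propagation_parity_class[OF assms(1) M] .
  note C = parity_class_eq_image[OF assms(1) M]
  have in_P: "node (b + 2 * r) \<in> set P" if "r \<le> M" for r
    using parity_class_subset C that by blast
  obtain r0 where "r0 \<le> M" "(x, node (b + 2 * r0)) \<in> A" using assms(3) C by auto
  then have "\<forall>r\<le>M. (x, node (b + 2 * r)) \<in> A" using all_out_if_no_inn no_in in_P by blast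
  then show ?thesis using no_in in_P by (auto simp: C maps_to_def dominates_def no_back_arc_def)
qed

lemma parity_class_maps_to:
  assumes "b \<le> 1" and no_out: "\<forall>y\<in>set P. (x, y) \<notin> A" and "\<exists>y\<in>parity_class b. (y, x) \<in> A"
  shows "maps_to A (parity_class b) {x}"
proof -
  obtain M where M: "k + 1 = 2 * M" by (rule k_plus_1_double)
  interpret adjacency_propagation "\<lambda>r. (x, node (b + 2 * r)) \<in> A" "\<lambda>r. (node (b + 2 * r), x) \<in> A" M
    using adjacency_propagation_parity_class[OF assms(1) M] .
  note C = parity_class_eq_image[OF assms(1) M]
  have in_P: "node (b + 2 * r) \<in> set P" if "r \<le> M" for r
    using parity_class_subset C that by blast
  obtain r0 where "r0 \<le> M" "(node (b + 2 * r0), x) \<in> A" using assms(3) C by auto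
  then have "\<forall>r\<le>M. (node (b + 2 * r), x) \<in> A" using all_inn_if_no_out no_out in_P by blast
  then show ?thesis using no_out in_P by (auto simp: C maps_to_def dominates_def no_back_arc_def)
qed

lemma parity_class_all_adjacent_or_split:
  assumes "b \<le> 1" and "\<exists>y\<in>parity_class b. adjacent A x y"
  shows "(\<forall>y\<in>parity_class b. adjacent A x y) \<or>
    maps_to A {P ! j | j. (odd j \<longleftrightarrow> odd b) \<and> b + k - 1 \<le> j \<and> j \<le> b + k + 1} {x} \<and>
    maps_to A {x} {P ! j | j. (odd j \<longleftrightarrow> odd b) \<and> j \<le> b + 2}"
proof -
  obtain M where M: "k + 1 = 2 * M" by (rule k_plus_1_double)
  interpret adjacency_propagation "\<lambda>r. (x, node (b + 2 * r)) \<in> A" "\<lambda>r. (node (b + 2 * r), x) \<in> A" M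
    using adjacency_propagation_parity_class[OF assms(1) M] .
  note C = parity_class_eq_image[OF assms(1) M]
  obtain r0 where "r0 \<le> M" "adjacent A x (node (b + 2 * r0))" using assms(2) C by auto
  then have "(\<forall>r\<le>M. adjacent A x (node (b + 2 * r))) \<or> end_pattern"
    using all_adjacent_or_end_pattern by (auto simp: adjacent_def)
  moreover have "{P ! j | j. (odd j \<longleftrightarrow> odd b) \<and> b + k - 1 \<le> j \<and> j \<le> b + k + 1} \<subseteq>
      {node (b + 2 * (M - 1)), node (b + 2 * M)}"
  proof
    fix y
    assume "y \<in> {P ! j | j. (odd j \<longleftrightarrow> odd b) \<and> b + k - 1 \<le> j \<and> j \<le> b + k + 1}"
    then obtain j where j: "y = P ! j" "odd j \<longleftrightarrow> odd b" "b + k - 1 \<le> j" "j \<le> b + k + 1" by blast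
    then have "j = b + 2 * (M - 1) \<or> j = b + 2 * M" using M k_ge by presburger
    then show "y \<in> {node (b + 2 * (M - 1)), node (b + 2 * M)}" using j assms(1) by auto
  qed
  moreover have "{P ! j | j. (odd j \<longleftrightarrow> odd b) \<and> j \<le> b + 2} \<subseteq> {node b, node (b + 2)}"
  proof
    fix y
    assume "y \<in> {P ! j | j. (odd j \<longleftrightarrow> odd b) \<and> j \<le> b + 2}"
    then obtain j where j: "y = P ! j" "odd j \<longleftrightarrow> odd b" "j \<le> b + 2" by blast
    then have "j = b \<or> j = b + 2" using assms(1) by presburger
    then show "y \<in> {node b, node (b + 2)}" using j assms(1) k_ge by auto
  qed
  moreover have "end_pattern \<Longrightarrow>
      maps_to A {node (b + 2 * (M - 1)), node (b + 2 * M)} {x} \<and> maps_to A {x} {node b, node (b + 2)}"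
    by (auto simp: end_pattern_def maps_to_def dominates_def no_back_arc_def)
  ultimately show ?thesis by (auto simp: C intro: maps_to_mono)
qed

end

theorem lemma2p10:
  fixes V :: "'a set" and A :: "('a \<times> 'a) set" and k :: nat
    and u v x :: 'a and P :: "'a list"
  assumes "digraph V A"
    and "odd k" and "k \<ge> 5"
    and "strong V A" and "k_quasi_transitive k V A"
    and "diam V A \<ge> k + 2"
    and "u \<in> V" and "v \<in> V" and "dist V A u v = k + 2"
    and "path_from_to V A P u v" and "length P = k + 3"
    and "x \<in> V - set P"
  defines "OP \<equiv> {P ! i | i. i \<le> k + 2 \<and> odd i}"
    and "EP \<equiv> {P ! i | i. i \<le> k + 2 \<and> even i}"
    and "I \<equiv> {y \<in> V - set P. no_back_arc A {y} (set P)}"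
    and "W \<equiv> {y \<in> V - set P. no_back_arc A (set P) {y}}"
    and "B \<equiv> V - (set P \<union> {y \<in> V - set P. no_back_arc A {y} (set P)} \<union> {y \<in> V - set P. no_back_arc A (set P) {y}})"
  shows
    "(x \<in> I \<longrightarrow>
        ((\<exists>y\<in>EP. (x, y) \<in> A) \<longrightarrow> maps_to A {x} EP) \<and>
        ((\<exists>y\<in>OP. (x, y) \<in> A) \<longrightarrow> maps_to A {x} OP))
   \<and> (x \<in> W \<longrightarrow>
        ((\<exists>y\<in>EP. (y, x) \<in> A) \<longrightarrow> maps_to A EP {x}) \<and>
        ((\<exists>y\<in>OP. (y, x) \<in> A) \<longrightarrow> maps_to A OP {x}))
   \<and> (x \<in> B \<longrightarrow>
        ((\<exists>y\<in>OP. adjacent A x y) \<longrightarrow>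
           (\<forall>y\<in>OP. adjacent A x y) \<or>
           (\<exists>s t. odd s \<and> odd t \<and> 3 \<le> t \<and> t < s \<and> s \<le> k \<and>
              maps_to A {P ! j | j. odd j \<and> s \<le> j \<and> j \<le> k + 2} {x} \<and>
              maps_to A {x} {P ! j | j. odd j \<and> j \<le> t})) \<and>
        ((\<exists>y\<in>EP. adjacent A x y) \<longrightarrow>
           (\<forall>y\<in>EP. adjacent A x y) \<or>
           (\<exists>s t. even s \<and> even t \<and> 2 \<le> t \<and> t < s \<and> s \<le> k - 1 \<and>
              maps_to A {P ! j | j. even j \<and> s \<le> j \<and> j \<le> k + 1} {x} \<and>
              maps_to A {x} {P ! j | j. even j \<and> j \<le> t})))"
proof -
  have "length P \<le> length ys" if "path_from_to V A ys (hd P) (last P)" for ys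
    using dist_less_length[OF that] assms(9-11) by (simp add: path_from_to_def)
  then interpret kqt_geodesic V A k P x
    using assms by unfold_locales (auto simp: path_from_to_def)
  have "parity_class 0 = EP" "parity_class 1 = OP"
    by (simp_all add: EP_def OP_def parity_class_def)
  note even_class = maps_to_parity_class[OF le0, unfolded this]
      parity_class_maps_to[OF le0, unfolded this]
      parity_class_all_adjacent_or_split[OF le0, unfolded this]
    and odd_class = maps_to_parity_class[OF order_refl, unfolded this]
      parity_class_maps_to[OF order_refl, unfolded this]
      parity_class_all_adjacent_or_split[OF order_refl, unfolded this]
  have "x \<in> I \<longleftrightarrow> (\<forall>y\<in>set P. (y, x) \<notin> A)"
    and "x \<in> W \<longleftrightarrow> (\<forall>y\<in>set P. (x, y) \<notin> A)"
    using assms(12) by (auto simp: I_def W_def no_back_arc_def)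
  \<comment> \<open>The witnesses are written like the bounds in the class lemma, so that \<open>simp\<close>
    normalises both sides in the same way.\<close>
  moreover have "\<exists>s t. odd s \<and> odd t \<and> 3 \<le> t \<and> t < s \<and> s \<le> k \<and>
      maps_to A {P ! j | j. odd j \<and> s \<le> j \<and> j \<le> k + 2} {x} \<and>
      maps_to A {x} {P ! j | j. odd j \<and> j \<le> t}"
    if "maps_to A {P ! j | j. (odd j \<longleftrightarrow> odd (1::nat)) \<and> 1 + k - 1 \<le> j \<and> j \<le> 1 + k + 1} {x} \<and>
      maps_to A {x} {P ! j | j. (odd j \<longleftrightarrow> odd (1::nat)) \<and> j \<le> 1 + 2}"
    using that \<open>odd k\<close> \<open>k \<ge> 5\<close> by (intro exI[of _ "1 + k - 1"] exI[of _ "1 + 2"]) simp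
  moreover have "\<exists>s t. even s \<and> even t \<and> 2 \<le> t \<and> t < s \<and> s \<le> k - 1 \<and>
      maps_to A {P ! j | j. even j \<and> s \<le> j \<and> j \<le> k + 1} {x} \<and>
      maps_to A {x} {P ! j | j. even j \<and> j \<le> t}"
    if "maps_to A {P ! j | j. (odd j \<longleftrightarrow> odd (0::nat)) \<and> 0 + k - 1 \<le> j \<and> j \<le> 0 + k + 1} {x} \<and>
      maps_to A {x} {P ! j | j. (odd j \<longleftrightarrow> odd (0::nat)) \<and> j \<le> 0 + 2}"
    using that \<open>odd k\<close> \<open>k \<ge> 5\<close> by (intro exI[of _ "0 + k - 1"] exI[of _ "0 + 2"]) simp
  ultimately show ?thesis
    using even_class odd_class by - (intro conjI impI; blast)
qed

end
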